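(* Let $\rho>1$, $0<\kappa<\kappa^c_\rho$ and $d\ge2$. Then $E(N_0)=\kappa^d$ and, for every integer $k\ge1$, $$E(N_k)\le\left(\frac{\kappa^{k+1}(1+\rho)^2}{4\rho}\right)^d.$$
   Context: Let $v_d$ be the volume of the unit Euclidean ball of $\mathbb{R}^d$. Let $\chi_1,\chi_\rho$ be independent homogeneous Poisson point processes on $\mathbb{R}^d$ with intensities $\lambda_1=\kappa^d/(v_d2^d)$ and $\lambda_\rho=\kappa^d/(v_d2^d\rho^d)$. Define $N_0=\#\{x_1\in\chi_\rho:\|x_1\|<2\rho\}$ and, for $k\ge1$, $N_k$ as the number of $x_{k+1}\in\chi_\rho$ for which there exist distinct $x_1,\dots,x_k\in\chi_1$ with $\|x_1\|<1+\rho$, $\|x_{i+1}-x_i\|<2$ for $1\le i\le k-1$, and $\|x_{k+1}-x_k\|<1+\rho$. $\kappa^c_\rho$ is defined as follows: for $k\ge1$ set $r_1=r_{k+1}=1+\rho$, $r_i=2$ for $2\le i\le k$; for $(a_i)_{2\le i\le k+1}\in[0,1)^k$ let $d_1=1+\rho$, $d_i^2=d_{i-1}^2+2r_ia_id_{i-1}+r_i^2$ ($d_i>0$), $\mathcal D(a_2,\dots,a_{k+1})=d_{k+1}$; $\kappa^c_\rho(k)=\inf_{0\le a_i<1}\max\big((4\rho/((1+\rho)^2\sqrt{\prod_{2\le i\le k+1}(1-a_i^2)}))^{1/(k+1)},\,2\rho/\mathcal D(a_2,\dots,a_{k+1})\big)$ and $\kappa^c_\rho=\inf_{k\ge1}\kappa^c_\rho(k)$.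 *)

theory Defs
  imports "HOL-Probability.Probability"
begin

definition unit_ball_vol :: "('d::finite) itself \<Rightarrow> real" where
  "unit_ball_vol _ = measure lborel (ball (0::real^'d) 1)"

(* Two independent homogeneous Poisson point processes X, Y on real^'d with
   intensities l1, l2, realised as random locally finite point sets on the
   probability space M: counts on disjoint bounded Borel sets are jointly
   independent (over both processes and all sets) and Poisson distributed
   with mean intensity * Lebesgue volume. *)
definition indep_PPP2 ::
  "'a measure \<Rightarrow> ('a \<Rightarrow> (real^'d::finite) set) \<Rightarrow> ('a \<Rightarrow> (real^'d) set)
     \<Rightarrow> real \<Rightarrow> real \<Rightarrow> bool" where
  "indep_PPP2 M X Y l1 l2 \<longleftrightarrow>
     prob_space M \<and>
     (\<forall>\<omega>\<in>space M. \<forall>B. bounded B \<longrightarrow> finite (X \<omega> \<inter> B) \<and> finite (Y \<omega> \<inter> B)) \<and>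
     (\<forall>(n::nat) (A::nat \<Rightarrow> (real^'d) set).
        (\<forall>i<n. A i \<in> sets lborel \<and> bounded (A i)) \<and> disjoint_family_on A {..<n} \<longrightarrow>
          prob_space.indep_vars M (\<lambda>_. count_space (UNIV::nat set))
             (\<lambda>(j::bool, i) \<omega>. card ((if j then X \<omega> else Y \<omega>) \<inter> A i)) (UNIV \<times> {..<n})
        \<and> (\<forall>i<n. \<forall>m::nat.
              measure M {\<omega>\<in>space M. card (X \<omega> \<inter> A i) = m}
                = (l1 * measure lborel (A i)) ^ m / fact m * exp (- (l1 * measure lborel (A i)))
            \<and> measure M {\<omega>\<in>space M. card (Y \<omega> \<inter> A i) = m}
                = (l2 * measure lborel (A i)) ^ m / fact m * exp (- (l2 * measure lborel (A i)))))"

definition N0 :: "real \<Rightarrow> (real^'d::finite) set \<Rightarrow> nat" where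
  "N0 \<rho> Xr = card {y \<in> Xr. norm y < 2 * \<rho>}"

definition Nk :: "real \<Rightarrow> nat \<Rightarrow> (real^'d::finite) set \<Rightarrow> (real^'d) set \<Rightarrow> nat" where
  "Nk \<rho> k X1 Xr = card {y \<in> Xr. \<exists>x::nat \<Rightarrow> real^'d.
       inj_on x {1..k} \<and> (\<forall>i\<in>{1..k}. x i \<in> X1) \<and> norm (x 1) < 1 + \<rho> \<and>
       (\<forall>i\<in>{1..k-1}. norm (x (i+1) - x i) < 2) \<and> norm (y - x k) < 1 + \<rho>}"

definition rr :: "real \<Rightarrow> nat \<Rightarrow> nat \<Rightarrow> real" where
  "rr \<rho> k i = (if i = 1 \<or> i = k + 1 then 1 + \<rho> else 2)"

fun dd :: "real \<Rightarrow> nat \<Rightarrow> (nat \<Rightarrow> real) \<Rightarrow> nat \<Rightarrow> real" where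
  "dd \<rho> k a 0 = 0"
| "dd \<rho> k a (Suc 0) = 1 + \<rho>"
| "dd \<rho> k a (Suc (Suc i)) =
     sqrt ((dd \<rho> k a (Suc i))\<^sup>2 + 2 * rr \<rho> k (Suc (Suc i)) * a (Suc (Suc i)) * dd \<rho> k a (Suc i)
           + (rr \<rho> k (Suc (Suc i)))\<^sup>2)"

definition DD :: "real \<Rightarrow> nat \<Rightarrow> (nat \<Rightarrow> real) \<Rightarrow> real" where
  "DD \<rho> k a = dd \<rho> k a (k + 1)"

definition kappa_c_k :: "real \<Rightarrow> nat \<Rightarrow> real" where
  "kappa_c_k \<rho> k = (INF a \<in> {a. \<forall>i\<in>{2..k+1}. 0 \<le> a i \<and> a i < 1}.
      max ((4 * \<rho> / ((1 + \<rho>)\<^sup>2 * sqrt (\<Prod>i\<in>{2..k+1}. 1 - (a i)\<^sup>2))) powr (1 / real (k + 1)))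
          (2 * \<rho> / DD \<rho> k a))"

definition kappa_c :: "real \<Rightarrow> real" where
  "kappa_c \<rho> = (INF k \<in> {1::nat..}. kappa_c_k \<rho> k)"

end

theory Submission
  imports Defs
begin

text \<open>
  \<open>N\<^sub>0\<close> counts the points of a Poisson process in a ball, so its mean is the intensity
  times the volume. For \<open>N\<^sub>k\<close> we discretise space into dyadic cubes of side \<open>2\<^sup>-\<^sup>n\<close>: once
  \<open>n\<close> is large (depending on the configuration), every counted point, together with a
  witnessing chain \<open>x\<^sub>1, \<dots>, x\<^sub>k\<close>, occupies distinct cubes forming a chain of near cubes, so
  \<open>N\<^sub>k\<close> is eventually dominated by a sum, over such cube chains, of products of cube counts.
  The counts in distinct cubes are independent, so each product has expectation
  \<open>\<lambda>\<^sub>1\<^sup>k \<lambda>\<^sub>\<rho>\<close> times the volumes of the cubes, and summing cube by cube along the chain bounds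
  the total by \<open>\<lambda>\<^sub>1\<^sup>k \<lambda>\<^sub>\<rho> |B(1+\<rho>)|\<^sup>2 |B(2)|\<^sup>k\<^sup>-\<^sup>1\<close>; Fatou's lemma transfers the bound to
  \<open>N\<^sub>k\<close>.
\<close>

section \<open>Poisson counts of the two point processes\<close>

lemma poisson_mean_sums:
  fixes \<mu> :: real
  shows "(\<lambda>m. real m * (\<mu> ^ m / fact m * exp (- \<mu>))) sums \<mu>"
proof -
  have "(\<lambda>n. \<mu> ^ n / fact n) sums exp \<mu>"
    using exp_converges[of \<mu>] by (simp add: divide_inverse mult.commute)
  then have "(\<lambda>n. (\<mu> * exp (- \<mu>)) * (\<mu> ^ n / fact n)) sums ((\<mu> * exp (- \<mu>)) * exp \<mu>)"
    by (rule sums_mult)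
  moreover have "(\<lambda>n. (\<mu> * exp (- \<mu>)) * (\<mu> ^ n / fact n))
      = (\<lambda>n. real (Suc n) * (\<mu> ^ Suc n / fact (Suc n) * exp (- \<mu>)))"
  proof
    fix n
    have "fact (Suc n) = real (Suc n) * (fact n :: real)" by simp
    then show "(\<mu> * exp (- \<mu>)) * (\<mu> ^ n / fact n) = real (Suc n) * (\<mu> ^ Suc n / fact (Suc n) * exp (- \<mu>))"
      by (simp add: exp_minus)
  qed
  moreover have "(\<mu> * exp (- \<mu>)) * exp \<mu> = \<mu>" by (simp add: exp_minus)
  ultimately have "(\<lambda>n. real (Suc n) * (\<mu> ^ Suc n / fact (Suc n) * exp (- \<mu>))) sums \<mu>"
    by simp
  then show ?thesis by (subst (asm) sums_Suc_iff) simp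
qed

lemma nn_integral_poisson_count:
  fixes f :: "'a \<Rightarrow> nat"
  assumes "prob_space M" and f: "f \<in> measurable M (count_space UNIV)" and "\<mu> \<ge> 0"
    and distr: "\<And>m. measure M {\<omega>\<in>space M. f \<omega> = m} = \<mu> ^ m / fact m * exp (- \<mu>)"
  shows "(\<integral>\<^sup>+ \<omega>. ennreal (real (f \<omega>)) \<partial>M) = ennreal \<mu>"
proof -
  interpret prob_space M by fact
  have level_sets: "{\<omega>\<in>space M. f \<omega> = m} \<in> sets M" for m
    using measurable_sets[OF f, of "{m}"] by (simp add: vimage_def Int_def conj_commute)
  have "ennreal (real (f \<omega>)) = (\<Sum>m. ennreal (real m) * indicator {\<omega>\<in>space M. f \<omega> = m} \<omega>)"
    if "\<omega> \<in> space M" for \<omega>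
    by (subst suminf_finite[of "{f \<omega>}"]) (auto simp: that)
  then have "(\<integral>\<^sup>+ \<omega>. ennreal (real (f \<omega>)) \<partial>M)
      = (\<integral>\<^sup>+ \<omega>. (\<Sum>m. ennreal (real m) * indicator {\<omega>\<in>space M. f \<omega> = m} \<omega>) \<partial>M)"
    by (rule nn_integral_cong)
  also have "\<dots> = (\<Sum>m. \<integral>\<^sup>+ \<omega>. ennreal (real m) * indicator {\<omega>\<in>space M. f \<omega> = m} \<omega> \<partial>M)"
    by (rule nn_integral_suminf) (use level_sets in auto)
  also have "\<dots> = (\<Sum>m. ennreal (real m) * ennreal (\<mu> ^ m / fact m * exp (- \<mu>)))"
    using level_sets by (simp only: nn_integral_cmult_indicator emeasure_eq_measure distr)
  also have "\<dots> = (\<Sum>m. ennreal (real m * (\<mu> ^ m / fact m * exp (- \<mu>))))"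
    using \<open>\<mu> \<ge> 0\<close> by (intro suminf_cong, subst ennreal_mult) auto
  also have "\<dots> = ennreal \<mu>"
    using poisson_mean_sums[of \<mu>] \<open>\<mu> \<ge> 0\<close> by (subst suminf_ennreal2) (auto simp: sums_iff)
  finally show ?thesis .
qed

lemma indep_PPP2_prob_space: "indep_PPP2 M X Y l1 l2 \<Longrightarrow> prob_space M"
  by (simp add: indep_PPP2_def)

lemma indep_PPP2_locally_finite:
  "indep_PPP2 M X Y l1 l2 \<Longrightarrow> \<omega> \<in> space M \<Longrightarrow> bounded B \<Longrightarrow> finite (X \<omega> \<inter> B) \<and> finite (Y \<omega> \<inter> B)"
  by (simp add: indep_PPP2_def)

lemma indep_PPP2_counts:
  fixes n :: nat
  assumes "indep_PPP2 M X Y l1 l2"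
    and "\<And>i. i < n \<Longrightarrow> A i \<in> sets lborel \<and> bounded (A i)" and "disjoint_family_on A {..<n}"
  shows "prob_space.indep_vars M (\<lambda>_. count_space UNIV)
           (\<lambda>(j, i) \<omega>. card ((if j then X \<omega> else Y \<omega>) \<inter> A i)) (UNIV \<times> {..<n})"
    and "\<And>i m. i < n \<Longrightarrow> measure M {\<omega>\<in>space M. card (X \<omega> \<inter> A i) = m}
              = (l1 * measure lborel (A i)) ^ m / fact m * exp (- (l1 * measure lborel (A i)))"
    and "\<And>i m. i < n \<Longrightarrow> measure M {\<omega>\<in>space M. card (Y \<omega> \<inter> A i) = m}
              = (l2 * measure lborel (A i)) ^ m / fact m * exp (- (l2 * measure lborel (A i)))"
proof -
  have "(\<forall>i<n. A i \<in> sets lborel \<and> bounded (A i)) \<and> disjoint_family_on A {..<n}"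
    using assms(2,3) by blast
  note axioms = conjunct2[OF conjunct2[OF assms(1)[unfolded indep_PPP2_def]], rule_format, OF this]
  from axioms show "prob_space.indep_vars M (\<lambda>_. count_space UNIV)
           (\<lambda>(j, i) \<omega>. card ((if j then X \<omega> else Y \<omega>) \<inter> A i)) (UNIV \<times> {..<n})"
    and "\<And>i m. i < n \<Longrightarrow> measure M {\<omega>\<in>space M. card (X \<omega> \<inter> A i) = m}
              = (l1 * measure lborel (A i)) ^ m / fact m * exp (- (l1 * measure lborel (A i)))"
    and "\<And>i m. i < n \<Longrightarrow> measure M {\<omega>\<in>space M. card (Y \<omega> \<inter> A i) = m}
              = (l2 * measure lborel (A i)) ^ m / fact m * exp (- (l2 * measure lborel (A i)))"
    by blast+
qed

lemma indep_PPP2_count: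
  assumes H: "indep_PPP2 M X Y l1 l2" and A: "A \<in> sets lborel" "bounded A"
  shows "(\<lambda>\<omega>. card (X \<omega> \<inter> A)) \<in> measurable M (count_space UNIV)"
    and "(\<lambda>\<omega>. card (Y \<omega> \<inter> A)) \<in> measurable M (count_space UNIV)"
    and "measure M {\<omega>\<in>space M. card (X \<omega> \<inter> A) = m}
           = (l1 * measure lborel A) ^ m / fact m * exp (- (l1 * measure lborel A))"
    and "measure M {\<omega>\<in>space M. card (Y \<omega> \<inter> A) = m}
           = (l2 * measure lborel A) ^ m / fact m * exp (- (l2 * measure lborel A))"
proof -
  interpret prob_space M using H by (rule indep_PPP2_prob_space)
  have single: "\<And>i::nat. i < 1 \<Longrightarrow> A \<in> sets lborel \<and> bounded A" "disjoint_family_on (\<lambda>_::nat. A) {..<1}"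
    using A by (auto simp: disjoint_family_on_def)
  note counts = indep_PPP2_counts[where n=1 and A="\<lambda>_. A", OF H single]
  have "random_variable (count_space UNIV) (\<lambda>\<omega>. card ((if b then X \<omega> else Y \<omega>) \<inter> A))" for b
    using counts(1) unfolding indep_vars_def by auto
  from this[of True] this[of False] counts(2,3)[where i=0]
  show "(\<lambda>\<omega>. card (X \<omega> \<inter> A)) \<in> measurable M (count_space UNIV)"
    and "(\<lambda>\<omega>. card (Y \<omega> \<inter> A)) \<in> measurable M (count_space UNIV)"
    and "measure M {\<omega>\<in>space M. card (X \<omega> \<inter> A) = m}
           = (l1 * measure lborel A) ^ m / fact m * exp (- (l1 * measure lborel A))"
    and "measure M {\<omega>\<in>space M. card (Y \<omega> \<inter> A) = m}
           = (l2 * measure lborel A) ^ m / fact m * exp (- (l2 * measure lborel A))"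
    by simp_all
qed

lemma
  assumes H: "indep_PPP2 M X Y l1 l2" and A: "A \<in> sets lborel" "bounded A"
  shows nn_integral_PPP2_count_fst:
      "l1 \<ge> 0 \<Longrightarrow> (\<integral>\<^sup>+ \<omega>. ennreal (real (card (X \<omega> \<inter> A))) \<partial>M) = ennreal (l1 * measure lborel A)"
    and nn_integral_PPP2_count_snd:
      "l2 \<ge> 0 \<Longrightarrow> (\<integral>\<^sup>+ \<omega>. ennreal (real (card (Y \<omega> \<inter> A))) \<partial>M) = ennreal (l2 * measure lborel A)"
  using nn_integral_poisson_count[OF indep_PPP2_prob_space[OF H] indep_PPP2_count(1)[OF H A]]
    nn_integral_poisson_count[OF indep_PPP2_prob_space[OF H] indep_PPP2_count(2)[OF H A]]
    indep_PPP2_count(3,4)[OF H A]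
  by simp_all

lemma nn_integral_PPP2_prod_counts:
  fixes A :: "nat \<Rightarrow> (real^'d::finite) set"
  assumes H: "indep_PPP2 M X Y l1 l2" and "l1 \<ge> 0" "l2 \<ge> 0"
    and A: "\<And>i. i < n \<Longrightarrow> A i \<in> sets lborel \<and> bounded (A i)" "disjoint_family_on A {..<n}"
    and "I \<subseteq> {..<n}" "j < n"
  shows "(\<integral>\<^sup>+\<omega>. (\<Prod>i\<in>I. ennreal (real (card (X \<omega> \<inter> A i)))) * ennreal (real (card (Y \<omega> \<inter> A j))) \<partial>M)
       = (\<Prod>i\<in>I. ennreal (l1 * measure lborel (A i))) * ennreal (l2 * measure lborel (A j))"
proof -
  interpret prob_space M using H by (rule indep_PPP2_prob_space)
  define W where "W = (\<lambda>(b::bool, i::nat) \<omega>. card ((if b then X \<omega> else Y \<omega>) \<inter> A i))"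
  define J where "J = Pair True ` I \<union> {(False, j)}"
  have "finite J" using \<open>I \<subseteq> {..<n}\<close> unfolding J_def by (auto intro: finite_subset)
  have "indep_vars (\<lambda>_. count_space UNIV) W J"
    unfolding W_def by (rule indep_vars_subset[OF indep_PPP2_counts(1)[OF H A]])
       (use \<open>I \<subseteq> {..<n}\<close> \<open>j < n\<close> in \<open>auto simp: J_def\<close>)
  then have "indep_vars (\<lambda>_. borel) (\<lambda>p \<omega>. ennreal (real (W p \<omega>))) J"
    by (rule indep_vars_compose2) simp
  then have "(\<integral>\<^sup>+\<omega>. (\<Prod>p\<in>J. ennreal (real (W p \<omega>))) \<partial>M)
      = (\<Prod>p\<in>J. \<integral>\<^sup>+\<omega>. ennreal (real (W p \<omega>)) \<partial>M)"
    by (rule indep_vars_nn_integral[OF \<open>finite J\<close>]) simp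
  moreover have "(\<Prod>p\<in>J. F p) = (\<Prod>i\<in>I. F (True, i)) * F (False, j)" for F :: "bool \<times> nat \<Rightarrow> ennreal"
  proof -
    have "(\<Prod>p\<in>J. F p) = (\<Prod>p\<in>Pair True ` I. F p) * F (False, j)"
      unfolding J_def using \<open>I \<subseteq> {..<n}\<close> by (subst prod.union_disjoint) (auto intro: finite_subset)
    also have "(\<Prod>p\<in>Pair True ` I. F p) = (\<Prod>i\<in>I. F (True, i))"
      by (subst prod.reindex) (auto simp: inj_on_def)
    finally show ?thesis .
  qed
  ultimately have "(\<integral>\<^sup>+\<omega>. (\<Prod>i\<in>I. ennreal (real (W (True, i) \<omega>))) * ennreal (real (W (False, j) \<omega>)) \<partial>M)
     = (\<Prod>i\<in>I. \<integral>\<^sup>+\<omega>. ennreal (real (W (True, i) \<omega>)) \<partial>M) * (\<integral>\<^sup>+\<omega>. ennreal (real (W (False, j) \<omega>)) \<partial>M)"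
    by simp
  moreover have "(\<integral>\<^sup>+\<omega>. ennreal (real (W (True, i) \<omega>)) \<partial>M) = ennreal (l1 * measure lborel (A i))" if "i \<in> I" for i
    using nn_integral_PPP2_count_fst[OF H, of "A i"] A \<open>l1 \<ge> 0\<close> \<open>I \<subseteq> {..<n}\<close> that by (auto simp: W_def)
  moreover have "(\<integral>\<^sup>+\<omega>. ennreal (real (W (False, j) \<omega>)) \<partial>M) = ennreal (l2 * measure lborel (A j))"
    using nn_integral_PPP2_count_snd[OF H, of "A j"] A \<open>l2 \<ge> 0\<close> \<open>j < n\<close> by (auto simp: W_def)
  ultimately show ?thesis by (simp add: W_def)
qed

section \<open>Dyadic cubes\<close>

definition dyadic_cube :: "nat \<Rightarrow> ('d::finite \<Rightarrow> int) \<Rightarrow> (real^'d) set" where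
  "dyadic_cube n z = {x. \<forall>j. real_of_int (z j) / 2^n \<le> x$j \<and> x$j < (real_of_int (z j) + 1) / 2^n}"

definition dyadic_index :: "nat \<Rightarrow> real^'d::finite \<Rightarrow> ('d \<Rightarrow> int)" where
  "dyadic_index n x = (\<lambda>j. \<lfloor>x$j * 2^n\<rfloor>)"

definition dyadic_corner :: "nat \<Rightarrow> ('d::finite \<Rightarrow> int) \<Rightarrow> real^'d" where
  "dyadic_corner n z = (\<chi> j. real_of_int (z j) / 2^n)"

lemma mem_dyadic_cube_iff: "x \<in> dyadic_cube n z \<longleftrightarrow> z = dyadic_index n x"
proof -
  have "(real_of_int (z j) / 2^n \<le> x$j \<and> x$j < (real_of_int (z j) + 1) / 2^n) \<longleftrightarrow> z j = \<lfloor>x$j * 2^n\<rfloor>" for j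
  proof -
    have "(real_of_int (z j) / 2^n \<le> x$j \<and> x$j < (real_of_int (z j) + 1) / 2^n)
       \<longleftrightarrow> (real_of_int (z j) \<le> x$j * 2^n \<and> x$j * 2^n < real_of_int (z j) + 1)"
      by (simp add: divide_simps)
    then show ?thesis by (metis floor_eq_iff)
  qed
  then show ?thesis by (auto simp: dyadic_cube_def dyadic_index_def fun_eq_iff)
qed

lemma mem_dyadic_cube_index: "x \<in> dyadic_cube n (dyadic_index n x)"
  by (simp add: mem_dyadic_cube_iff)

lemma dyadic_cubes_disjoint: "z \<noteq> z' \<Longrightarrow> dyadic_cube n z \<inter> dyadic_cube n z' = {}"
  by (auto simp: mem_dyadic_cube_iff)

lemma dyadic_corner_mem: "dyadic_corner n z \<in> dyadic_cube n z"
  by (simp add: dyadic_cube_def dyadic_corner_def divide_simps)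

lemma dyadic_cube_diameter:
  fixes x y :: "real^'d::finite"
  assumes "x \<in> dyadic_cube n z" "y \<in> dyadic_cube n z"
  shows "dist x y \<le> real CARD('d) / 2^n"
proof -
  have "\<bar>(x - y)$j\<bar> \<le> 1 / 2^n" for j
    using assms by (auto simp: dyadic_cube_def add_divide_distrib abs_le_iff dest!: spec[of _ j])
  then have "(\<Sum>j\<in>UNIV. \<bar>(x - y)$j\<bar>) \<le> real CARD('d) / 2^n"
    using sum_mono[of UNIV "\<lambda>j. \<bar>(x - y)$j\<bar>" "\<lambda>_. 1 / 2^n"] by simp
  then show ?thesis using norm_le_l1_cart[of "x - y"] by (simp add: dist_norm)
qed

lemma dist_dyadic_index_le: "p \<in> dyadic_cube n (dyadic_index n a) \<Longrightarrow> dist p a \<le> real CARD('d) / 2^n"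
  for a :: "real^'d::finite"
  using dyadic_cube_diameter mem_dyadic_cube_index by blast

lemma sets_borel_dyadic_cube [measurable, simp]: "dyadic_cube n z \<in> sets borel"
  unfolding dyadic_cube_def by measurable

lemma dyadic_cube_subset_cball: "dyadic_cube n z \<subseteq> cball (dyadic_corner n z) (real CARD('d) / 2^n)"
  for z :: "'d::finite \<Rightarrow> int"
  using dyadic_cube_diameter[OF dyadic_corner_mem] by (auto simp: dist_commute)

lemma bounded_dyadic_cube: "bounded (dyadic_cube n z)"
  using bounded_subset[OF bounded_cball dyadic_cube_subset_cball] .

lemma finite_dyadic_cubes_in_ball: "finite {z::'d::finite \<Rightarrow> int. dyadic_cube n z \<subseteq> ball 0 R}"
proof (rule finite_subset)
  define K where "K = \<lceil>R * 2^n\<rceil>"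
  show "{z::'d \<Rightarrow> int. dyadic_cube n z \<subseteq> ball 0 R} \<subseteq> Pi\<^sub>E UNIV (\<lambda>_. {-K..K})"
  proof (clarsimp simp: PiE_UNIV_domain)
    fix z :: "'d \<Rightarrow> int" and j assume "dyadic_cube n z \<subseteq> ball 0 R"
    then have "norm (dyadic_corner n z) < R" using dyadic_corner_mem[of n z] by auto
    then have "\<bar>real_of_int (z j) / 2^n\<bar> < R"
      using component_le_norm_cart[of "dyadic_corner n z" j] by (simp add: dyadic_corner_def)
    then have "\<bar>real_of_int (z j)\<bar> \<le> real_of_int K"
      unfolding K_def by (simp add: divide_simps abs_divide) (meson le_of_int_ceiling less_le_trans nless_le not_le)
    then show "- K \<le> z j \<and> z j \<le> K" by linarith
  qed
qed (intro finite_PiE; simp)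

lemma sum_measure_dyadic_cubes_le:
  fixes c :: "real^'d::finite"
  assumes "finite U" and "\<And>u. u \<in> U \<Longrightarrow> dyadic_cube n u \<subseteq> ball c r"
  shows "(\<Sum>u\<in>U. measure lborel (dyadic_cube n u)) \<le> measure lborel (ball c r)"
proof -
  have "(\<Union>u\<in>U. dyadic_cube n u) \<in> sets lborel"
    using assms(1) by (intro sets.finite_UN) simp_all
  have "(\<Sum>u\<in>U. measure lborel (dyadic_cube n u)) = measure lborel (\<Union>u\<in>U. dyadic_cube n u)"
    by (rule measure_finite_Union[symmetric])
       (use assms(1) emeasure_bounded_finite[OF bounded_dyadic_cube] in
         \<open>auto simp: disjoint_family_on_def dyadic_cubes_disjoint less_top[symmetric]\<close>)
  also have "\<dots> \<le> measure lborel (ball c r)"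
    using assms \<open>(\<Union>u\<in>U. dyadic_cube n u) \<in> sets lborel\<close>
    by (intro measure_mono_fmeasurable) (auto intro!: fmeasurableI emeasure_bounded_finite)
  finally show ?thesis .
qed

lemma eventually_dyadic_diameter_less:
  "\<epsilon> > 0 \<Longrightarrow> eventually (\<lambda>n. real CARD('d::finite) / 2^n < \<epsilon>) sequentially"
  by (rule order_tendstoD(2)[OF LIMSEQ_divide_realpow_zero]) simp_all

lemma eventually_dyadic_index_neq:
  fixes a b :: "real^'d::finite"
  assumes "a \<noteq> b"
  shows "eventually (\<lambda>n. dyadic_index n a \<noteq> dyadic_index n b) sequentially"
proof -
  have "dist a b > 0" using assms by simp
  from eventually_dyadic_diameter_less[where 'd='d, OF this] show ?thesis
  proof (rule eventually_mono)
    fix n assume "real CARD('d) / 2^n < dist a b"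
    then show "dyadic_index n a \<noteq> dyadic_index n b"
      using dist_dyadic_index_le[of a n b] mem_dyadic_cube_index[of a n] by auto
  qed
qed

lemma measure_lborel_ball:
  fixes c :: "real^'d::finite"
  assumes "r \<ge> 0"
  shows "measure lborel (ball c r) = unit_ball_vol TYPE('d) * r ^ CARD('d)"
  using content_ball[of r c] content_ball[of 1 "0::real^'d"] assms
  by (simp add: unit_ball_vol_def)

definition dyadic_cubes_near :: "nat \<Rightarrow> real \<Rightarrow> ('d::finite \<Rightarrow> int) \<Rightarrow> ('d \<Rightarrow> int) \<Rightarrow> bool" where
  "dyadic_cubes_near n r u v \<longleftrightarrow> (\<forall>p\<in>dyadic_cube n u. \<forall>q\<in>dyadic_cube n v. dist p q < r)"

lemma dyadic_cubes_near_subset_ball: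
  "dyadic_cubes_near n r u v \<Longrightarrow> dyadic_cube n v \<subseteq> ball (dyadic_corner n u) r"
  using dyadic_corner_mem[of n u] by (auto simp: dyadic_cubes_near_def)

lemma finite_dyadic_cubes_near: "finite {v. dyadic_cubes_near n r u v}"
proof (rule finite_subset[OF _ finite_dyadic_cubes_in_ball])
  show "{v. dyadic_cubes_near n r u v} \<subseteq> {v. dyadic_cube n v \<subseteq> ball 0 (norm (dyadic_corner n u) + r)}"
    using dyadic_cubes_near_subset_ball ball_subset_ball_iff[of "dyadic_corner n u" r 0] by fastforce
qed

lemma sum_measure_dyadic_cubes_near_le:
  fixes u :: "'d::finite \<Rightarrow> int"
  assumes "r \<ge> 0"
  shows "(\<Sum>v\<in>{v. dyadic_cubes_near n r u v}. measure lborel (dyadic_cube n v))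
    \<le> measure lborel (ball (0::real^'d) r)"
proof -
  have "(\<Sum>v\<in>{v. dyadic_cubes_near n r u v}. measure lborel (dyadic_cube n v))
      \<le> measure lborel (ball (dyadic_corner n u) r)"
    by (rule sum_measure_dyadic_cubes_le[OF finite_dyadic_cubes_near])
       (simp add: dyadic_cubes_near_subset_ball)
  then show ?thesis using assms by (simp add: measure_lborel_ball)
qed

definition dyadic_chains :: "nat \<Rightarrow> real \<Rightarrow> real \<Rightarrow> nat \<Rightarrow> ('d::finite \<Rightarrow> int) list set" where
  "dyadic_chains n r s m = {zs. length zs = m \<and> dyadic_cube n (zs!0) \<subseteq> ball 0 r \<and>
     (\<forall>i. Suc i < m \<longrightarrow> dyadic_cubes_near n s (zs!i) (zs!Suc i))}"

lemma dyadic_chains_1: "dyadic_chains n r s 1 = (\<lambda>u. [u]) ` {u. dyadic_cube n u \<subseteq> ball 0 r}"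
  by (auto simp: dyadic_chains_def length_Suc_conv)

lemma dyadic_chains_Suc:
  assumes "m \<ge> 1"
  shows "dyadic_chains n r s (Suc m)
    = (\<lambda>(zs, u). zs @ [u]) ` (SIGMA zs:dyadic_chains n r s m. {u. dyadic_cubes_near n s (last zs) u})"
proof (intro equalityI subsetI)
  fix zs' assume zs': "zs' \<in> dyadic_chains n r s (Suc m)"
  define zs u where "zs = butlast zs'" and "u = last zs'"
  have len: "length zs = m" using zs' by (simp add: zs_def dyadic_chains_def)
  have "zs' \<noteq> []" using zs' by (auto simp: dyadic_chains_def)
  then have eq: "zs' = zs @ [u]" by (simp add: zs_def u_def)
  have nth: "zs ! i = zs' ! i" if "i < m" for i
    using that len by (simp add: eq nth_append)
  have chain: "zs \<in> dyadic_chains n r s m"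
    using zs' assms len nth by (auto simp: dyadic_chains_def)
  have "\<forall>i<m. dyadic_cubes_near n s (zs' ! i) (zs' ! Suc i)"
    using zs' by (simp add: dyadic_chains_def)
  then have "dyadic_cubes_near n s (zs' ! (m - 1)) (zs' ! m)"
    using assms by (metis Suc_diff_1 diff_less less_numeral_extra(1) order_less_le_trans)
  moreover have "zs \<noteq> []" using assms len by auto
  then have "zs' ! (m - 1) = last zs" "zs' ! m = u"
    using assms len by (simp_all add: eq nth_append last_conv_nth)
  ultimately have "dyadic_cubes_near n s (last zs) u"
    by simp
  with chain show "zs' \<in> (\<lambda>(zs, u). zs @ [u]) ` (SIGMA zs:dyadic_chains n r s m. {u. dyadic_cubes_near n s (last zs) u})"
    using eq by force
next
  fix zs' assume "zs' \<in> (\<lambda>(zs, u). zs @ [u]) ` (SIGMA zs:dyadic_chains n r s m. {u. dyadic_cubes_near n s (last zs) u})"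
  then obtain zs u where zs': "zs' = zs @ [u]" and zs: "zs \<in> dyadic_chains n r s m"
    and u: "dyadic_cubes_near n s (last zs) u"
    by auto
  have len: "length zs = m" using zs by (simp add: dyadic_chains_def)
  then have "zs \<noteq> []" using assms by auto
  with len have last: "last zs = zs ! (m - 1)" by (simp add: last_conv_nth)
  have "dyadic_cubes_near n s (zs' ! i) (zs' ! Suc i)" if "Suc i < Suc m" for i
  proof (cases "Suc i < m")
    case True
    then show ?thesis using zs len by (simp add: zs' nth_append dyadic_chains_def)
  next
    case False
    then have "i = m - 1" using that by simp
    then show ?thesis using u len assms by (simp add: zs' nth_append last)
  qed
  moreover have "zs' ! 0 = zs ! 0" "length zs' = Suc m"
    using len assms by (simp_all add: zs' nth_append)
  ultimately show "zs' \<in> dyadic_chains n r s (Suc m)"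
    using zs by (simp add: dyadic_chains_def)
qed

lemma finite_dyadic_chains: "finite (dyadic_chains n r s m)"
proof (cases "m = 0")
  case True
  then have "dyadic_chains n r s m \<subseteq> {[]}" by (auto simp: dyadic_chains_def)
  then show ?thesis by (rule finite_subset) simp
next
  case False
  then have "m \<ge> 1" by simp
  then show ?thesis
  proof (induction m rule: nat_induct_at_least)
    case base
    show ?case unfolding dyadic_chains_1 by (intro finite_imageI finite_dyadic_cubes_in_ball)
  next
    case (Suc m)
    then show ?case
      unfolding dyadic_chains_Suc[OF Suc(1)] by (intro finite_imageI finite_SigmaI finite_dyadic_cubes_near)
  qed
qed

lemma sum_prod_measure_dyadic_chains_le:
  fixes n :: nat
  assumes "m \<ge> 1" and "r \<ge> 0" and "s \<ge> 0"
  shows "(\<Sum>zs\<in>(dyadic_chains n r s m :: ('d::finite \<Rightarrow> int) list set). \<Prod>i<m. measure lborel (dyadic_cube n (zs!i)))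
     \<le> measure lborel (ball (0::real^'d) r) * measure lborel (ball (0::real^'d) s) ^ (m - 1)"
  using assms(1)
proof (induction m rule: nat_induct_at_least)
  case base
  have "(\<Sum>zs\<in>(dyadic_chains n r s 1 :: ('d \<Rightarrow> int) list set). \<Prod>i<1. measure lborel (dyadic_cube n (zs!i)))
      = (\<Sum>u\<in>{u::'d \<Rightarrow> int. dyadic_cube n u \<subseteq> ball 0 r}. measure lborel (dyadic_cube n u))"
    unfolding dyadic_chains_1 by (subst sum.reindex) (auto simp: inj_on_def)
  also have "\<dots> \<le> measure lborel (ball (0::real^'d) r)"
    by (rule sum_measure_dyadic_cubes_le[OF finite_dyadic_cubes_in_ball]) simp
  finally show ?case by simp
next
  case (Suc m)
  let ?\<mu> = "\<lambda>u::'d \<Rightarrow> int. measure lborel (dyadic_cube n u)"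
  let ?B = "\<lambda>R. measure lborel (ball (0::real^'d) R)"
  let ?C = "dyadic_chains n r s m :: ('d \<Rightarrow> int) list set"
  have "(\<Sum>zs\<in>dyadic_chains n r s (Suc m). \<Prod>i<Suc m. ?\<mu> (zs!i))
      = (\<Sum>zs\<in>?C. \<Sum>u\<in>{u. dyadic_cubes_near n s (last zs) u}. \<Prod>i<Suc m. ?\<mu> ((zs @ [u])!i))"
    unfolding dyadic_chains_Suc[OF Suc(1)]
    by (subst sum.reindex) (auto simp: inj_on_def case_prod_beta sum.Sigma finite_dyadic_chains finite_dyadic_cubes_near)
  also have "\<dots> = (\<Sum>zs\<in>?C. (\<Prod>i<m. ?\<mu> (zs!i)) * (\<Sum>u\<in>{u. dyadic_cubes_near n s (last zs) u}. ?\<mu> u))"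
    by (intro sum.cong refl) (auto simp: dyadic_chains_def nth_append sum_distrib_left)
  also have "\<dots> \<le> (\<Sum>zs\<in>?C. (\<Prod>i<m. ?\<mu> (zs!i)) * ?B s)"
    by (intro sum_mono mult_left_mono sum_measure_dyadic_cubes_near_le prod_nonneg) (auto simp: \<open>s \<ge> 0\<close>)
  also have "\<dots> = (\<Sum>zs\<in>?C. \<Prod>i<m. ?\<mu> (zs!i)) * ?B s"
    by (simp add: sum_distrib_right)
  also have "\<dots> \<le> (?B r * ?B s ^ (m - 1)) * ?B s"
    by (intro mult_right_mono Suc(2)) simp
  also have "\<dots> = ?B r * ?B s ^ (Suc m - 1)"
    using Suc(1) by (cases m) (auto simp: algebra_simps)
  finally show ?case .
qed

section \<open>Discretised chain counts\<close>

definition cube_count :: "(real^'d::finite) set \<Rightarrow> nat \<Rightarrow> ('d \<Rightarrow> int) \<Rightarrow> ennreal" where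
  "cube_count S n u = ennreal (real (card (S \<inter> dyadic_cube n u)))"

definition dyadic_paths ::
  "nat \<Rightarrow> real \<Rightarrow> real \<Rightarrow> real \<Rightarrow> nat \<Rightarrow> (('d::finite \<Rightarrow> int) list \<times> ('d \<Rightarrow> int)) set" where
  "dyadic_paths n r s t k =
     (SIGMA zs:{zs \<in> dyadic_chains n r s k. distinct zs}. {w. dyadic_cubes_near n t (last zs) w})"

definition path_count ::
  "nat \<Rightarrow> real \<Rightarrow> real \<Rightarrow> real \<Rightarrow> nat \<Rightarrow> (real^'d::finite) set \<Rightarrow> (real^'d) set \<Rightarrow> ennreal" where
  "path_count n r s t k S T =
     (\<Sum>p\<in>dyadic_paths n r s t k. (\<Prod>i<k. cube_count S n (fst p ! i)) * cube_count T n (snd p))"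

lemma finite_dyadic_paths: "finite (dyadic_paths n r s t k)"
  unfolding dyadic_paths_def
  by (intro finite_SigmaI finite_dyadic_cubes_near) (auto intro: finite_subset[OF _ finite_dyadic_chains])

lemma
  assumes H: "indep_PPP2 M X Y l1 l2"
  shows measurable_cube_count_fst: "(\<lambda>\<omega>. cube_count (X \<omega>) n u) \<in> borel_measurable M"
    and measurable_cube_count_snd: "(\<lambda>\<omega>. cube_count (Y \<omega>) n u) \<in> borel_measurable M"
proof -
  have "dyadic_cube n u \<in> sets lborel" by simp
  note counts = indep_PPP2_count(1,2)[OF H this bounded_dyadic_cube]
  show "(\<lambda>\<omega>. cube_count (X \<omega>) n u) \<in> borel_measurable M"
    and "(\<lambda>\<omega>. cube_count (Y \<omega>) n u) \<in> borel_measurable M"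
    unfolding cube_count_def by (simp_all add: measurable_compose[OF counts(1)] measurable_compose[OF counts(2)])
qed

lemma measurable_path_count:
  "indep_PPP2 M X Y l1 l2 \<Longrightarrow> (\<lambda>\<omega>. path_count n r s t k (X \<omega>) (Y \<omega>)) \<in> borel_measurable M"
  using measurable_cube_count_fst measurable_cube_count_snd unfolding path_count_def by measurable

lemma nn_integral_prod_cube_counts:
  fixes zs :: "('d::finite \<Rightarrow> int) list" and X Y :: "'a \<Rightarrow> (real^'d) set"
  assumes H: "indep_PPP2 M X Y l1 l2" and "l1 \<ge> 0" "l2 \<ge> 0" and zs: "distinct zs" "length zs = k"
  shows "(\<integral>\<^sup>+\<omega>. (\<Prod>i<k. cube_count (X \<omega>) n (zs!i)) * cube_count (Y \<omega>) n w \<partial>M)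
       = ennreal ((\<Prod>i<k. l1 * measure lborel (dyadic_cube n (zs!i))) * (l2 * measure lborel (dyadic_cube n w)))"
proof -
  note prod_counts = nn_integral_PPP2_prod_counts[OF H \<open>l1 \<ge> 0\<close> \<open>l2 \<ge> 0\<close>]
  have disj: "dyadic_cube n (zs!i) \<inter> dyadic_cube n (zs!j) = {}" if "i < k" "j < k" "i \<noteq> j" for i j
    using that zs by (intro dyadic_cubes_disjoint) (simp add: nth_eq_iff_index_eq)
  have "(\<integral>\<^sup>+\<omega>. (\<Prod>i<k. cube_count (X \<omega>) n (zs!i)) * cube_count (Y \<omega>) n w \<partial>M)
      = (\<Prod>i<k. ennreal (l1 * measure lborel (dyadic_cube n (zs!i)))) * ennreal (l2 * measure lborel (dyadic_cube n w))"
  proof (cases "w \<in> set zs")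
    \<comment> \<open>The \<open>Y\<close>-cube may be one of the \<open>X\<close>-cubes: counts of \<open>X\<close> and \<open>Y\<close> in the same cube are independent.\<close>
    case True
    then obtain j where "j < k" "zs!j = w" using zs by (auto simp: in_set_conv_nth)
    with prod_counts[of k "\<lambda>i. dyadic_cube n (zs!i)" "{..<k}" j] disj show ?thesis
      by (simp add: cube_count_def bounded_dyadic_cube disjoint_family_on_def)
  next
    case False
    define A where "A i = dyadic_cube n (if i < k then zs!i else w)" for i
    have "dyadic_cube n (zs!i) \<inter> dyadic_cube n w = {}" if "i < k" for i
      using False that zs by (intro dyadic_cubes_disjoint) auto
    then have "disjoint_family_on A {..<Suc k}"
      using disj by (auto simp: disjoint_family_on_def A_def Int_commute)
    with prod_counts[of "Suc k" A "{..<k}" k] show ?thesis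
      by (simp add: A_def cube_count_def bounded_dyadic_cube)
  qed
  also have "\<dots> = ennreal ((\<Prod>i<k. l1 * measure lborel (dyadic_cube n (zs!i))) * (l2 * measure lborel (dyadic_cube n w)))"
  proof -
    have "(\<Prod>i<k. ennreal (l1 * measure lborel (dyadic_cube n (zs!i))))
        = ennreal (\<Prod>i<k. l1 * measure lborel (dyadic_cube n (zs!i)))"
      using \<open>l1 \<ge> 0\<close> by (intro prod_ennreal) auto
    moreover have "0 \<le> (\<Prod>i<k. l1 * measure lborel (dyadic_cube n (zs!i)))"
      using \<open>l1 \<ge> 0\<close> by (intro prod_nonneg) auto
    ultimately show ?thesis
      using \<open>l2 \<ge> 0\<close> by (simp only: ennreal_mult mult_nonneg_nonneg measure_nonneg)
  qed
  finally show ?thesis .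
qed

lemma sum_dyadic_paths_le:
  fixes n :: nat
  assumes "l1 \<ge> 0" "l2 \<ge> 0" and "k \<ge> 1" and "r \<ge> 0" "s \<ge> 0" "t \<ge> 0"
  shows "(\<Sum>p\<in>(dyadic_paths n r s t k :: (('d::finite \<Rightarrow> int) list \<times> ('d \<Rightarrow> int)) set).
            (\<Prod>i<k. l1 * measure lborel (dyadic_cube n (fst p ! i))) * (l2 * measure lborel (dyadic_cube n (snd p))))
    \<le> l1 ^ k * l2 * measure lborel (ball (0::real^'d) r) * measure lborel (ball (0::real^'d) s) ^ (k - 1)
        * measure lborel (ball (0::real^'d) t)"
proof -
  let ?\<mu> = "\<lambda>u::'d \<Rightarrow> int. measure lborel (dyadic_cube n u)"
  let ?B = "\<lambda>R. measure lborel (ball (0::real^'d) R)"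
  let ?D = "{zs \<in> (dyadic_chains n r s k :: ('d \<Rightarrow> int) list set). distinct zs}"
  have "finite ?D" by (rule finite_subset[OF _ finite_dyadic_chains]) auto
  have "(\<Sum>p\<in>dyadic_paths n r s t k. (\<Prod>i<k. l1 * ?\<mu> (fst p ! i)) * (l2 * ?\<mu> (snd p)))
      = (\<Sum>zs\<in>?D. \<Sum>w\<in>{w. dyadic_cubes_near n t (last zs) w}. (\<Prod>i<k. l1 * ?\<mu> (zs ! i)) * (l2 * ?\<mu> w))"
    unfolding dyadic_paths_def using \<open>finite ?D\<close>
    by (subst sum.Sigma) (auto simp: finite_dyadic_cubes_near case_prod_beta)
  also have "\<dots> = (\<Sum>zs\<in>?D. (\<Prod>i<k. l1 * ?\<mu> (zs ! i)) * l2 * (\<Sum>w\<in>{w. dyadic_cubes_near n t (last zs) w}. ?\<mu> w))"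
    by (simp add: sum_distrib_left mult.assoc)
  also have "\<dots> \<le> (\<Sum>zs\<in>?D. (\<Prod>i<k. l1 * ?\<mu> (zs ! i)) * l2 * ?B t)"
    using assms by (intro sum_mono mult_left_mono sum_measure_dyadic_cubes_near_le mult_nonneg_nonneg prod_nonneg) auto
  also have "\<dots> \<le> (\<Sum>zs\<in>dyadic_chains n r s k. (\<Prod>i<k. l1 * ?\<mu> (zs ! i)) * l2 * ?B t)"
    using assms by (intro sum_mono2 finite_dyadic_chains) (auto intro!: mult_nonneg_nonneg prod_nonneg)
  also have "\<dots> = l1 ^ k * l2 * ?B t * (\<Sum>zs\<in>dyadic_chains n r s k. \<Prod>i<k. ?\<mu> (zs ! i))"
    by (simp add: prod.distrib sum_distrib_left sum_distrib_right mult_ac)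
  also have "\<dots> \<le> l1 ^ k * l2 * ?B t * (?B r * ?B s ^ (k - 1))"
    using assms by (intro mult_left_mono sum_prod_measure_dyadic_chains_le) auto
  finally show ?thesis by (simp add: mult_ac)
qed

lemma nn_integral_path_count_le:
  fixes X Y :: "'a \<Rightarrow> (real^'d::finite) set"
  assumes H: "indep_PPP2 M X Y l1 l2" and "l1 \<ge> 0" "l2 \<ge> 0" and "k \<ge> 1" and "r \<ge> 0" "s \<ge> 0" "t \<ge> 0"
  shows "(\<integral>\<^sup>+\<omega>. path_count n r s t k (X \<omega>) (Y \<omega>) \<partial>M)
    \<le> ennreal (l1 ^ k * l2 * measure lborel (ball (0::real^'d) r) * measure lborel (ball (0::real^'d) s) ^ (k - 1)
        * measure lborel (ball (0::real^'d) t))"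
proof -
  let ?t = "\<lambda>p::('d \<Rightarrow> int) list \<times> ('d \<Rightarrow> int).
    (\<Prod>i<k. l1 * measure lborel (dyadic_cube n (fst p ! i))) * (l2 * measure lborel (dyadic_cube n (snd p)))"
  have "(\<integral>\<^sup>+\<omega>. path_count n r s t k (X \<omega>) (Y \<omega>) \<partial>M)
      = (\<Sum>p\<in>dyadic_paths n r s t k. \<integral>\<^sup>+\<omega>. (\<Prod>i<k. cube_count (X \<omega>) n (fst p ! i)) * cube_count (Y \<omega>) n (snd p) \<partial>M)"
    unfolding path_count_def
    by (rule nn_integral_sum) (use measurable_cube_count_fst[OF H] measurable_cube_count_snd[OF H] in measurable)
  also have "\<dots> = (\<Sum>p\<in>dyadic_paths n r s t k. ennreal (?t p))"
    using assms by (intro sum.cong refl nn_integral_prod_cube_counts) (auto simp: dyadic_paths_def dyadic_chains_def)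
  also have "\<dots> = ennreal (\<Sum>p\<in>dyadic_paths n r s t k. ?t p)"
    using assms by (intro sum_ennreal) (auto intro!: mult_nonneg_nonneg prod_nonneg)
  also have "\<dots> \<le> ennreal (l1 ^ k * l2 * measure lborel (ball (0::real^'d) r) * measure lborel (ball (0::real^'d) s) ^ (k - 1)
        * measure lborel (ball (0::real^'d) t))"
    using assms by (intro ennreal_leI sum_dyadic_paths_le)
  finally show ?thesis .
qed

section \<open>Eventual domination of Nk by discretised counts\<close>

lemma eventually_dyadic_cube_subset_ball:
  fixes a :: "real^'d::finite"
  assumes "norm a < r"
  shows "eventually (\<lambda>n. dyadic_cube n (dyadic_index n a) \<subseteq> ball 0 r) sequentially"
proof -
  have "r - norm a > 0" using assms by simp
  from eventually_dyadic_diameter_less[where 'd='d, OF this] show ?thesis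
  proof (rule eventually_mono, intro subsetI)
    fix n p assume "real CARD('d) / 2^n < r - norm a" and "p \<in> dyadic_cube n (dyadic_index n a)"
    with dist_dyadic_index_le[of p n a] norm_triangle_ineq2[of p a]
    show "p \<in> ball 0 r" by (simp add: dist_norm)
  qed
qed

lemma eventually_dyadic_cubes_near:
  fixes a b :: "real^'d::finite"
  assumes "dist a b < r"
  shows "eventually (\<lambda>n. dyadic_cubes_near n r (dyadic_index n a) (dyadic_index n b)) sequentially"
proof -
  have "(r - dist a b) / 2 > 0" using assms by simp
  from eventually_dyadic_diameter_less[where 'd='d, OF this] show ?thesis
    unfolding dyadic_cubes_near_def
  proof (rule eventually_mono, intro ballI)
    fix n p q assume D: "real CARD('d) / 2^n < (r - dist a b) / 2"
      and p: "p \<in> dyadic_cube n (dyadic_index n a)" and q: "q \<in> dyadic_cube n (dyadic_index n b)"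
    from D have "2 * (real CARD('d) / 2^n) < r - dist a b" by (simp add: field_simps)
    with dist_dyadic_index_le[OF p] dist_dyadic_index_le[OF q, unfolded dist_commute[of q b]]
      dist_triangle[of p q a] dist_triangle[of a q b]
    show "dist p q < r" by linarith
  qed
qed

lemma eventually_dyadic_path:
  fixes x :: "nat \<Rightarrow> real^'d::finite"
  assumes "k \<ge> 1" and "inj_on x {1..k}" and "norm (x 1) < r"
    and "\<And>i. i \<in> {1..k-1} \<Longrightarrow> dist (x i) (x (Suc i)) < s" and "dist (x k) y < t"
  shows "eventually (\<lambda>n. (map (\<lambda>i. dyadic_index n (x (Suc i))) [0..<k], dyadic_index n y)
    \<in> dyadic_paths n r s t k) sequentially"
proof -
  have "eventually (\<lambda>n. dyadic_cubes_near n s (dyadic_index n (x (Suc i))) (dyadic_index n (x (Suc (Suc i)))))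
      sequentially" if "i \<in> {..<k-1}" for i
    using that by (intro eventually_dyadic_cubes_near assms(4)) auto
  moreover have "eventually (\<lambda>n. dyadic_index n (x (Suc i)) \<noteq> dyadic_index n (x (Suc j))) sequentially"
    if "i \<in> {..<k}" "j \<in> {..<k} - {i}" for i j
    using that by (intro eventually_dyadic_index_neq) (simp add: inj_on_eq_iff[OF assms(2)])
  ultimately have "eventually (\<lambda>n. \<forall>i\<in>{..<k-1}.
      dyadic_cubes_near n s (dyadic_index n (x (Suc i))) (dyadic_index n (x (Suc (Suc i))))) sequentially"
    and "eventually (\<lambda>n. \<forall>i\<in>{..<k}. \<forall>j\<in>{..<k} - {i}.
      dyadic_index n (x (Suc i)) \<noteq> dyadic_index n (x (Suc j))) sequentially"
    by (simp_all add: eventually_ball_finite_distrib)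
  moreover have "eventually (\<lambda>n. dyadic_cube n (dyadic_index n (x 1)) \<subseteq> ball 0 r) sequentially"
    using assms(3) by (rule eventually_dyadic_cube_subset_ball)
  moreover have "eventually (\<lambda>n. dyadic_cubes_near n t (dyadic_index n (x k)) (dyadic_index n y)) sequentially"
    using assms(5) by (rule eventually_dyadic_cubes_near)
  ultimately show ?thesis
  proof eventually_elim
    case (elim n)
    define zs where "zs = map (\<lambda>i. dyadic_index n (x (Suc i))) [0..<k]"
    have "length zs = k" "zs ! 0 = dyadic_index n (x 1)" "last zs = dyadic_index n (x k)"
      using \<open>k \<ge> 1\<close> by (simp_all add: zs_def last_map)
    moreover have "\<forall>i. Suc i < k \<longrightarrow> dyadic_cubes_near n s (zs ! i) (zs ! Suc i)"
      using elim(1) by (simp add: zs_def)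
    moreover have "distinct zs"
      using elim(2) by (auto simp: zs_def distinct_conv_nth)
    ultimately show ?case
      using elim(3,4) by (simp add: zs_def [symmetric] dyadic_paths_def dyadic_chains_def)
  qed
qed

lemma one_le_cube_count:
  assumes "a \<in> S" and "finite (S \<inter> dyadic_cube n (dyadic_index n a))"
  shows "1 \<le> cube_count S n (dyadic_index n a)"
proof -
  have "S \<inter> dyadic_cube n (dyadic_index n a) \<noteq> {}"
    using assms(1) mem_dyadic_cube_index by blast
  with assms(2) show ?thesis
    by (simp add: cube_count_def Suc_le_eq card_gt_0_iff)
qed

lemma card_le_path_count:
  fixes S T :: "(real^'d::finite) set" and x :: "real^'d \<Rightarrow> nat \<Rightarrow> real^'d"
  assumes S: "\<And>B. bounded B \<Longrightarrow> finite (S \<inter> B)" and T: "\<And>B. bounded B \<Longrightarrow> finite (T \<inter> B)"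
    and "F \<subseteq> T" and x: "\<And>y i. y \<in> F \<Longrightarrow> i \<in> {1..k} \<Longrightarrow> x y i \<in> S"
    and paths: "\<And>y. y \<in> F \<Longrightarrow>
      (map (\<lambda>i. dyadic_index n (x y (Suc i))) [0..<k], dyadic_index n y) \<in> dyadic_paths n r s t k"
    and "inj_on (dyadic_index n) F"
  shows "ennreal (real (card F)) \<le> path_count n r s t k S T"
proof -
  define g where "g y = (map (\<lambda>i. dyadic_index n (x y (Suc i))) [0..<k], dyadic_index n y)" for y
  define f where "f p = (\<Prod>i<k. cube_count S n (fst p ! i)) * cube_count T n (snd p)" for p
  have "inj_on g F"
    using \<open>inj_on (dyadic_index n) F\<close> by (auto simp: inj_on_def g_def)
  have one: "1 \<le> f (g y)" if "y \<in> F" for y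
  proof -
    have "1 \<le> (\<Prod>i<k. cube_count S n (dyadic_index n (x y (Suc i))))"
      using x[OF \<open>y \<in> F\<close>] by (intro prod_ge_1 one_le_cube_count S bounded_dyadic_cube) auto
    moreover have "1 \<le> cube_count T n (dyadic_index n y)"
      using \<open>y \<in> F\<close> \<open>F \<subseteq> T\<close> by (intro one_le_cube_count T bounded_dyadic_cube) auto
    ultimately have "1 * 1 \<le> (\<Prod>i<k. cube_count S n (dyadic_index n (x y (Suc i)))) * cube_count T n (dyadic_index n y)"
      by (intro mult_mono) auto
    then show ?thesis by (simp add: f_def g_def)
  qed
  have "ennreal (real (card F)) = (\<Sum>p\<in>g ` F. 1)"
    using card_image[OF \<open>inj_on g F\<close>] by (simp add: ennreal_of_nat_eq_real_of_nat)
  also have "\<dots> \<le> (\<Sum>p\<in>g ` F. f p)"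
    by (rule sum_mono) (use one in auto)
  also have "\<dots> \<le> (\<Sum>p\<in>dyadic_paths n r s t k. f p)"
    using paths by (intro sum_mono2 finite_dyadic_paths) (auto simp: g_def)
  finally show ?thesis by (simp add: path_count_def f_def)
qed

lemma Nk_le_path_count_eventually:
  fixes S T :: "(real^'d::finite) set"
  assumes S: "\<And>B. bounded B \<Longrightarrow> finite (S \<inter> B)" and T: "\<And>B. bounded B \<Longrightarrow> finite (T \<inter> B)"
    and "k \<ge> 1"
  shows "eventually (\<lambda>n. ennreal (real (Nk \<rho> k S T)) \<le> path_count n (1 + \<rho>) 2 (1 + \<rho>) k S T) sequentially"
proof -
  define chain where "chain y x \<longleftrightarrow> inj_on x {1..k} \<and> (\<forall>i\<in>{1..k}. x i \<in> S) \<and> norm (x 1) < 1 + \<rho> \<and>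
       (\<forall>i\<in>{1..k-1}. norm (x (i+1) - x i) < 2) \<and> norm (y - x k) < 1 + \<rho>" for y and x :: "nat \<Rightarrow> real^'d"
  define F where "F = {y \<in> T. \<exists>x. chain y x}"
  have Nk_eq: "Nk \<rho> k S T = card F" by (simp add: Nk_def F_def chain_def)
  show ?thesis
  proof (cases "finite F")
    case False
    \<comment> \<open>then \<open>card F = 0\<close>\<close>
    then show ?thesis by (simp add: Nk_eq)
  next
    case True
    have "\<forall>y\<in>F. \<exists>x. chain y x" by (simp add: F_def)
    then obtain x where x: "\<And>y. y \<in> F \<Longrightarrow> chain y (x y)" by metis
    have "eventually (\<lambda>n. (map (\<lambda>i. dyadic_index n (x y (Suc i))) [0..<k], dyadic_index n y)
        \<in> dyadic_paths n (1 + \<rho>) 2 (1 + \<rho>) k) sequentially" if "y \<in> F" for y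
      using x[OF that] \<open>k \<ge> 1\<close> unfolding chain_def
      by (intro eventually_dyadic_path) (auto simp: dist_norm norm_minus_commute)
    moreover have "eventually (\<lambda>n. dyadic_index n y \<noteq> dyadic_index n y') sequentially"
      if "y \<in> F" "y' \<in> F - {y}" for y y'
      using that by (intro eventually_dyadic_index_neq) auto
    ultimately have "eventually (\<lambda>n. \<forall>y\<in>F.
        (map (\<lambda>i. dyadic_index n (x y (Suc i))) [0..<k], dyadic_index n y) \<in> dyadic_paths n (1 + \<rho>) 2 (1 + \<rho>) k)
        sequentially"
      and "eventually (\<lambda>n. \<forall>y\<in>F. \<forall>y'\<in>F - {y}. dyadic_index n y \<noteq> dyadic_index n y') sequentially"
      using \<open>finite F\<close> by (simp_all add: eventually_ball_finite_distrib)
    then show ?thesis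
    proof eventually_elim
      case (elim n)
      have "inj_on (dyadic_index n) F"
        using elim(2) by (auto simp: inj_on_def)
      with elim(1) x S T show ?case
        unfolding Nk_eq by (intro card_le_path_count[where x = x]) (auto simp: F_def chain_def)
    qed
  qed
qed

lemma nn_integral_N0:
  fixes Y :: "'a \<Rightarrow> (real^'d::finite) set"
  assumes "indep_PPP2 M X Y l1 l2" and "l2 \<ge> 0"
  shows "(\<integral>\<^sup>+\<omega>. ennreal (real (N0 \<rho> (Y \<omega>))) \<partial>M) = ennreal (l2 * measure lborel (ball (0::real^'d) (2 * \<rho>)))"
proof -
  have "N0 \<rho> S = card (S \<inter> ball 0 (2 * \<rho>))" for S :: "(real^'d) set"
    by (simp add: N0_def Int_def conj_commute)
  with nn_integral_PPP2_count_snd[OF assms(1) _ _ assms(2)] show ?thesis by simp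
qed

lemma nn_integral_Nk_le:
  fixes X Y :: "'a \<Rightarrow> (real^'d::finite) set"
  assumes H: "indep_PPP2 M X Y l1 l2" and "l1 \<ge> 0" "l2 \<ge> 0" and "\<rho> \<ge> 0" and "k \<ge> 1"
  shows "(\<integral>\<^sup>+\<omega>. ennreal (real (Nk \<rho> k (X \<omega>) (Y \<omega>))) \<partial>M)
    \<le> ennreal (l1 ^ k * l2 * measure lborel (ball (0::real^'d) (1 + \<rho>)) * measure lborel (ball (0::real^'d) 2) ^ (k - 1)
        * measure lborel (ball (0::real^'d) (1 + \<rho>)))"
proof -
  let ?T = "\<lambda>n \<omega>. path_count n (1 + \<rho>) 2 (1 + \<rho>) k (X \<omega>) (Y \<omega>)"
  have "(\<integral>\<^sup>+\<omega>. ennreal (real (Nk \<rho> k (X \<omega>) (Y \<omega>))) \<partial>M) \<le> (\<integral>\<^sup>+\<omega>. liminf (\<lambda>n. ?T n \<omega>) \<partial>M)"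
    using indep_PPP2_locally_finite[OF H] \<open>k \<ge> 1\<close>
    by (intro nn_integral_mono Liminf_bounded Nk_le_path_count_eventually) auto
  also have "\<dots> \<le> liminf (\<lambda>n. \<integral>\<^sup>+\<omega>. ?T n \<omega> \<partial>M)"
    by (intro nn_integral_liminf measurable_path_count[OF H])
  also have "\<dots> \<le> limsup (\<lambda>n. \<integral>\<^sup>+\<omega>. ?T n \<omega> \<partial>M)"
    by (rule Liminf_le_Limsup) simp
  also have "\<dots> \<le> ennreal (l1 ^ k * l2 * measure lborel (ball (0::real^'d) (1 + \<rho>)) * measure lborel (ball (0::real^'d) 2) ^ (k - 1)
        * measure lborel (ball (0::real^'d) (1 + \<rho>)))"
    using assms by (intro Limsup_bounded always_eventually allI nn_integral_path_count_le) auto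
  finally show ?thesis .
qed

lemma intensity_volume_product_eq:
  fixes u \<kappa> \<rho> :: real and d k :: nat
  assumes "u > 0" "\<rho> > 0" "k \<ge> 1"
  shows "(\<kappa> ^ d / (u * 2 ^ d)) ^ k * (\<kappa> ^ d / (u * 2 ^ d * \<rho> ^ d)) * (u * (1 + \<rho>) ^ d)
      * (u * 2 ^ d) ^ (k - 1) * (u * (1 + \<rho>) ^ d)
    = (\<kappa> ^ (k + 1) * (1 + \<rho>)\<^sup>2 / (4 * \<rho>)) ^ d"
proof -
  obtain j where k: "k = Suc j" using assms(3) by (cases k) auto
  have "(2 ^ d)\<^sup>2 = (4::real) ^ d" by (simp add: power2_eq_square flip: power_mult_distrib)
  then have "(\<kappa> ^ (k + 1) * (1 + \<rho>)\<^sup>2 / (4 * \<rho>)) ^ d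
      = (\<kappa> ^ d) ^ (k + 1) * ((1 + \<rho>) ^ d)\<^sup>2 / ((2 ^ d)\<^sup>2 * \<rho> ^ d)"
    by (simp add: power_mult_distrib power_divide flip: power_mult) (simp add: mult.commute power_mult)
  then show ?thesis
    using assms by (simp add: k field_simps power2_eq_square power_divide)
qed

theorem lemma2p3:
  fixes M :: "'a measure" and X1 Xr :: "'a \<Rightarrow> (real^'d::finite) set"
    and \<rho> \<kappa> :: real
  assumes "CARD('d) \<ge> 2" and "\<rho> > 1" and "0 < \<kappa>" and "\<kappa> < kappa_c \<rho>"
    and "indep_PPP2 M X1 Xr
           (\<kappa> ^ CARD('d) / (unit_ball_vol TYPE('d) * 2 ^ CARD('d)))
           (\<kappa> ^ CARD('d) / (unit_ball_vol TYPE('d) * 2 ^ CARD('d) * \<rho> ^ CARD('d)))"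
  shows "(\<integral>\<^sup>+ \<omega>. ennreal (real (N0 \<rho> (Xr \<omega>))) \<partial>M) = ennreal (\<kappa> ^ CARD('d))
    \<and> (\<forall>k::nat. k \<ge> 1 \<longrightarrow>
           (\<integral>\<^sup>+ \<omega>. ennreal (real (Nk \<rho> k (X1 \<omega>) (Xr \<omega>))) \<partial>M)
             \<le> ennreal ((\<kappa> ^ (k + 1) * (1 + \<rho>)\<^sup>2 / (4 * \<rho>)) ^ CARD('d)))"
proof (intro conjI allI impI)
  let ?u = "unit_ball_vol TYPE('d)"
  have u: "?u > 0"
    using content_ball_gt_0_iff[of "0::real^'d" 1] by (simp add: unit_ball_vol_def)
  have ball_vol: "measure lborel (ball (0::real^'d) r) = ?u * r ^ CARD('d)" if "r \<ge> 0" for r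
    using that by (rule measure_lborel_ball)
  show "(\<integral>\<^sup>+ \<omega>. ennreal (real (N0 \<rho> (Xr \<omega>))) \<partial>M) = ennreal (\<kappa> ^ CARD('d))"
    using nn_integral_N0[OF assms(5)] u assms(2,3) by (simp add: ball_vol power_mult_distrib)
  fix k :: nat assume "k \<ge> 1"
  have "(\<integral>\<^sup>+ \<omega>. ennreal (real (Nk \<rho> k (X1 \<omega>) (Xr \<omega>))) \<partial>M)
      \<le> ennreal ((\<kappa> ^ CARD('d) / (?u * 2 ^ CARD('d))) ^ k * (\<kappa> ^ CARD('d) / (?u * 2 ^ CARD('d) * \<rho> ^ CARD('d)))
          * (?u * (1 + \<rho>) ^ CARD('d)) * (?u * 2 ^ CARD('d)) ^ (k - 1) * (?u * (1 + \<rho>) ^ CARD('d)))"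
    using nn_integral_Nk_le[OF assms(5) _ _ _ \<open>k \<ge> 1\<close>] u assms(2,3) by (simp add: ball_vol)
  also have "\<dots> = ennreal ((\<kappa> ^ (k + 1) * (1 + \<rho>)\<^sup>2 / (4 * \<rho>)) ^ CARD('d))"
    using u assms(2) \<open>k \<ge> 1\<close> by (intro arg_cong[where f = ennreal] intensity_volume_product_eq) auto
  finally show "(\<integral>\<^sup>+ \<omega>. ennreal (real (Nk \<rho> k (X1 \<omega>) (Xr \<omega>))) \<partial>M)
      \<le> ennreal ((\<kappa> ^ (k + 1) * (1 + \<rho>)\<^sup>2 / (4 * \<rho>)) ^ CARD('d))" .
qed

end
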